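(* Let $S$ be a finite relational signature and let $R$ be a relational Bayesian network (RBN) over $S$ that contains no combination functions, i.e. for each $r/k\in S$ its probability formula $F_r(X_1,\ldots,X_k)$ is built only from constants $q\in[0,1]$, atoms $s(Y_1,\ldots,Y_l)$ with $s/l\in S$ and each $Y_j\in\{X_1,\ldots,X_k\}$, and convex combinations $F_1\cdot F_2+(1-F_1)\cdot F_3$; and suppose $R$ is acyclic for every domain size. Then the family $\{Q^{(n)}\mid n\in\mathbb{N}\}$ of distributions defined by $R$ is a projective random relational structure model.
   Context: A relational signature $S$ is a set of relation symbols with arities, written $r/k$ ($k\geq 0$). For $n\in\mathbb{N}$ let $[n]=\{0,\ldots,n-1\}$ and let $\Omega^{(n)}$ be the set of all possible worlds for $S$ over domain $[n]$, i.e. truth assignments to all ground atoms $r(\mathbf{i})$ with $r/k\in S$, $\mathbf{i}\in[n]^k$. A random relational structure model (RRSM) is a family $\{Q^{(n)}\mid n\in\mathbb{N}\}$ with $Q^{(n)}$ a probability distribution on $\Omega^{(n)}$. $Q^{(n)}$ is exchangeable if $Q^{(n)}(\omega)=Q^{(n)}(\omega')$ whenever $\omega,\omega'$ are isomorphic. For $m\le n$, $Q^{(n)}\downarrow[m]$ denotes the marginal distribution of $Q^{(n)}$ on the ground atoms $r(\mathbf{i})$ with $\mathbf{i}\in[m]^k$ (identified with a distribution on $\Omega^{(m)}$). An RRSM is projective if every $Q^{(n)}$ is exchangeable and $Q^{(n)}\downarrow[m]=Q^{(m)}$ for all $m<n$. RBN semantics (combination-function-free fragment): an RBN assigns to each $r/k\in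 S$ a probability formula $F_r(X_1,\ldots,X_k)$ in distinct variables $X_1,\ldots,X_k$, built as described in the claim. For a domain $[n]$ and $\mathbf{i}\in[n]^k$, substituting $\mathbf{i}$ for $(X_1,\ldots,X_k)$ gives a ground formula $F_r(\mathbf{i})$ whose value in $[0,1]$ is computed in a world $\omega$ by: a constant evaluates to itself, a ground atom evaluates to $1$ if true in $\omega$ and $0$ otherwise, and $F_1F_2+(1-F_1)F_3$ is evaluated arithmetically. The parents of $r(\mathbf{i})$ are the ground atoms occurring in $F_r(\mathbf{i})$. The RBN is acyclic if for every $n$ this parent relation on ground atoms over $[n]$ is acyclic. Then $Q^{(n)}(\omega)=\prod_{r/k\in S}\prod_{\mathbf{i}\in[n]^k} p_{r,\mathbf{i}}(\omega)$, where $p_{r,\mathbf{i}}(\omega)$ is the value of $F_r(\mathbf{i})$ in $\omega$ if $r(\mathbf{i})$ is true in $\omega$ and one minus this value otherwise (i.e. $Q^{(n)}$ is the Bayesian network on the ground atoms with these parents and conditional probabilities). *)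

theory Defs
  imports Complex_Main
begin

text \<open>A possible world over [n] = {0..<n} is the set of ground atoms
  that are true in it.\<close>

type_synonym 'r gatom = "'r \<times> nat list"

definition gatoms :: "'r set \<Rightarrow> ('r \<Rightarrow> nat) \<Rightarrow> nat \<Rightarrow> 'r gatom set" where
  "gatoms S ar n = {(r, i). r \<in> S \<and> length i = ar r \<and> set i \<subseteq> {..<n}}"

definition worlds :: "'r set \<Rightarrow> ('r \<Rightarrow> nat) \<Rightarrow> nat \<Rightarrow> 'r gatom set set" where
  "worlds S ar n = Pow (gatoms S ar n)"

text \<open>Probability formulas without combination functions.  The variables
  X_1,...,X_k of F_r are represented by the indices 0,...,k-1.\<close>

datatype 'r pform =
    PConst real
  | PAtom 'r "nat list"
  | PConv "'r pform" "'r pform" "'r pform"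

fun wf_pform :: "'r set \<Rightarrow> ('r \<Rightarrow> nat) \<Rightarrow> nat \<Rightarrow> 'r pform \<Rightarrow> bool" where
  "wf_pform S ar k (PConst q) = (0 \<le> q \<and> q \<le> 1)"
| "wf_pform S ar k (PAtom s vs) = (s \<in> S \<and> length vs = ar s \<and> (\<forall>v\<in>set vs. v < k))"
| "wf_pform S ar k (PConv F1 F2 F3) =
     (wf_pform S ar k F1 \<and> wf_pform S ar k F2 \<and> wf_pform S ar k F3)"

fun peval :: "'r pform \<Rightarrow> nat list \<Rightarrow> 'r gatom set \<Rightarrow> real" where
  "peval (PConst q) i w = q"
| "peval (PAtom s vs) i w = (if (s, map (\<lambda>j. i ! j) vs) \<in> w then 1 else 0)"
| "peval (PConv F1 F2 F3) i w =
     peval F1 i w * peval F2 i w + (1 - peval F1 i w) * peval F3 i w"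

fun patoms :: "'r pform \<Rightarrow> nat list \<Rightarrow> 'r gatom set" where
  "patoms (PConst q) i = {}"
| "patoms (PAtom s vs) i = {(s, map (\<lambda>j. i ! j) vs)}"
| "patoms (PConv F1 F2 F3) i = patoms F1 i \<union> patoms F2 i \<union> patoms F3 i"

text \<open>Parent relation on ground atoms over [n]: (a, b) means a is a parent of b.\<close>
definition parent_rel ::
  "'r set \<Rightarrow> ('r \<Rightarrow> nat) \<Rightarrow> ('r \<Rightarrow> 'r pform) \<Rightarrow> nat \<Rightarrow> 'r gatom rel" where
  "parent_rel S ar F n = {(a, (r, i)) | a r i. (r, i) \<in> gatoms S ar n \<and> a \<in> patoms (F r) i}"

definition rbn_acyclic :: "'r set \<Rightarrow> ('r \<Rightarrow> nat) \<Rightarrow> ('r \<Rightarrow> 'r pform) \<Rightarrow> bool" where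
  "rbn_acyclic S ar F = (\<forall>n. acyclic (parent_rel S ar F n))"

definition rbn_dist ::
  "'r set \<Rightarrow> ('r \<Rightarrow> nat) \<Rightarrow> ('r \<Rightarrow> 'r pform) \<Rightarrow> nat \<Rightarrow> 'r gatom set \<Rightarrow> real" where
  "rbn_dist S ar F n w =
     (\<Prod>(r, i)\<in>gatoms S ar n.
        if (r, i) \<in> w then peval (F r) i w else 1 - peval (F r) i w)"

definition is_distribution :: "'a set \<Rightarrow> ('a \<Rightarrow> real) \<Rightarrow> bool" where
  "is_distribution \<Omega> P = ((\<forall>w\<in>\<Omega>. 0 \<le> P w) \<and> (\<Sum>w\<in>\<Omega>. P w) = 1)"

definition is_RRSM :: "'r set \<Rightarrow> ('r \<Rightarrow> nat) \<Rightarrow> (nat \<Rightarrow> 'r gatom set \<Rightarrow> real) \<Rightarrow> bool" where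
  "is_RRSM S ar Q = (\<forall>n. is_distribution (worlds S ar n) (Q n))"

definition isomorphic_worlds ::
  "'r set \<Rightarrow> ('r \<Rightarrow> nat) \<Rightarrow> nat \<Rightarrow> 'r gatom set \<Rightarrow> 'r gatom set \<Rightarrow> bool" where
  "isomorphic_worlds S ar n w w' =
     (\<exists>\<pi>. bij_betw \<pi> {..<n} {..<n} \<and>
        (\<forall>(r, i)\<in>gatoms S ar n. ((r, i) \<in> w \<longleftrightarrow> (r, map \<pi> i) \<in> w')))"

definition exchangeable ::
  "'r set \<Rightarrow> ('r \<Rightarrow> nat) \<Rightarrow> nat \<Rightarrow> ('r gatom set \<Rightarrow> real) \<Rightarrow> bool" where
  "exchangeable S ar n P =
     (\<forall>w\<in>worlds S ar n. \<forall>w'\<in>worlds S ar n.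
        isomorphic_worlds S ar n w w' \<longrightarrow> P w = P w')"

definition marginal ::
  "'r set \<Rightarrow> ('r \<Rightarrow> nat) \<Rightarrow> nat \<Rightarrow> ('r gatom set \<Rightarrow> real) \<Rightarrow> nat \<Rightarrow> 'r gatom set \<Rightarrow> real" where
  "marginal S ar n P m w =
     (\<Sum>w'\<in>{w'\<in>worlds S ar n. w' \<inter> gatoms S ar m = w}. P w')"

definition projective :: "'r set \<Rightarrow> ('r \<Rightarrow> nat) \<Rightarrow> (nat \<Rightarrow> 'r gatom set \<Rightarrow> real) \<Rightarrow> bool" where
  "projective S ar Q =
     ((\<forall>n. exchangeable S ar n (Q n)) \<and>
      (\<forall>m n. m < n \<longrightarrow> (\<forall>w\<in>worlds S ar m. marginal S ar n (Q n) m w = Q m w)))"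

end

theory Submission
  imports Defs
begin

(* Q^(n) is the Bayesian network on the ground atoms over [n].  In any Bayesian network,
   a node without children can be summed out: its two factors add up to 1 and no other
   factor depends on it.  Peeling off such sinks one at a time (acyclicity provides them)
   shows that the marginal on a set B of nodes closed under parents is the network
   restricted to B.  The ground atoms over [m] form such a set inside those over [n],
   because the parents of r(i) only mention elements of i; this gives projectivity,
   and B = {} gives normalisation.  Exchangeability holds because a permutation pi of [n]
   permutes the ground atoms and carries the factor of r(i) to that of r(pi(i)). *)

definition bn_factor :: "('a \<Rightarrow> 'a set \<Rightarrow> real) \<Rightarrow> 'a \<Rightarrow> 'a set \<Rightarrow> real" where
  "bn_factor p a w = (if a \<in> w then p a w else 1 - p a w)"

definition bn_prob :: "'a set \<Rightarrow> ('a \<Rightarrow> 'a set \<Rightarrow> real) \<Rightarrow> 'a set \<Rightarrow> real" where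
  "bn_prob A p w = (\<Prod>a\<in>A. bn_factor p a w)"

lemma bn_prob_nonneg:
  assumes "\<And>a. a \<in> A \<Longrightarrow> 0 \<le> p a w \<and> p a w \<le> 1"
  shows "0 \<le> bn_prob A p w"
  unfolding bn_prob_def bn_factor_def using assms by (intro prod_nonneg) auto

lemma finite_acyclic_obtain_maximal:
  assumes "finite R" "acyclic R" "x \<in> C"
  obtains a where "a \<in> C" "\<forall>y\<in>C. (a, y) \<notin> R"
proof -
  obtain a where "a \<in> C" "\<And>y. (y, a) \<in> R\<inverse> \<Longrightarrow> y \<notin> C"
    using wfE_min[OF finite_acyclic_wf_converse[OF assms(1,2)] assms(3)] by blast
  then show thesis using that by blast
qed

lemma sum_subsets_insert:
  assumes "a \<notin> A" "a \<notin> B" "finite A"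
  shows "(\<Sum>w | w \<subseteq> insert a A \<and> w \<inter> B = v. g w)
       = (\<Sum>w | w \<subseteq> A \<and> w \<inter> B = v. g w + g (insert a w))"
proof -
  let ?X = "{w. w \<subseteq> A \<and> w \<inter> B = v}"
  have split: "{w. w \<subseteq> insert a A \<and> w \<inter> B = v} = ?X \<union> insert a ` ?X"
  proof (intro equalityI subsetI)
    fix w assume w: "w \<in> {w. w \<subseteq> insert a A \<and> w \<inter> B = v}"
    show "w \<in> ?X \<union> insert a ` ?X"
    proof (cases "a \<in> w")
      case True
      then have "w = insert a (w - {a})" "w - {a} \<in> ?X" using w assms(2) by auto
      then show ?thesis by blast
    qed (use w in auto)
  qed (use assms(2) in auto)
  have "finite ?X" using assms(3) by (auto intro: finite_subset[of _ "Pow A"])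
  moreover have "inj_on (insert a) ?X"
  proof (rule inj_onI)
    fix x y assume "x \<in> ?X" "y \<in> ?X" "insert a x = insert a y"
    moreover have "a \<notin> x" "a \<notin> y" using calculation(1,2) assms(1) by auto
    ultimately show "x = y" by (metis Diff_insert_absorb)
  qed
  moreover have "?X \<inter> insert a ` ?X = {}" using assms(1) by auto
  ultimately show ?thesis unfolding split by (simp add: sum.union_disjoint sum.reindex sum.distrib)
qed

lemma bn_prob_remove_sink:
  assumes "finite A" "a \<in> A" "a \<notin> w"
    and local: "\<And>b w w'. b \<in> A \<Longrightarrow> w \<inter> pa b = w' \<inter> pa b \<Longrightarrow> p b w = p b w'"
    and sink: "\<forall>b\<in>A. a \<notin> pa b"
  shows "bn_prob A p w + bn_prob A p (insert a w) = bn_prob (A - {a}) p w"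
proof -
  have unchanged: "p b (insert a w) = p b w" if "b \<in> A" for b
  proof (rule local[OF that])
    show "insert a w \<inter> pa b = w \<inter> pa b" using sink that by auto
  qed
  have "bn_factor p b (insert a w) = bn_factor p b w" if "b \<in> A - {a}" for b
    using unchanged that by (simp add: bn_factor_def)
  then have rest: "bn_prob (A - {a}) p (insert a w) = bn_prob (A - {a}) p w"
    unfolding bn_prob_def by (rule prod.cong[OF refl])
  have split: "bn_prob A p u = bn_factor p a u * bn_prob (A - {a}) p u" for u
    unfolding bn_prob_def using assms(1,2) by (rule prod.remove)
  have "bn_prob A p w + bn_prob A p (insert a w)
      = (bn_factor p a w + bn_factor p a (insert a w)) * bn_prob (A - {a}) p w"
    unfolding split rest by (simp add: distrib_right)
  also have "bn_factor p a w + bn_factor p a (insert a w) = 1"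
    using assms(3) unchanged[OF assms(2)] by (simp add: bn_factor_def)
  finally show ?thesis by simp
qed

lemma bn_prob_marginal:
  assumes "finite A" "B \<subseteq> A" "\<forall>b\<in>B. pa b \<subseteq> B" "v \<subseteq> B"
    and "\<And>a w w'. a \<in> A \<Longrightarrow> w \<inter> pa a = w' \<inter> pa a \<Longrightarrow> p a w = p a w'"
    and "acyclic {(x, a). a \<in> A \<and> x \<in> pa a}"
  shows "(\<Sum>w | w \<subseteq> A \<and> w \<inter> B = v. bn_prob A p w) = bn_prob B p v"
  using assms
proof (induction "card (A - B)" arbitrary: A)
  case 0
  then have "A = B" by auto
  moreover have "{w. w \<subseteq> B \<and> w \<inter> B = v} = {v}" using 0 by auto
  ultimately show ?case by simp
next
  case (Suc k)
  have "A - B \<noteq> {}" using Suc.hyps(2) by (metis card.empty nat.distinct(1))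
  then obtain x where x: "x \<in> A - B" by blast
  define R where "R = {(x, a). x \<in> A \<and> a \<in> A \<and> x \<in> pa a}"
  have "finite R" unfolding R_def using Suc.prems(1) by (auto intro: finite_subset[of _ "A \<times> A"])
  moreover have "acyclic R" unfolding R_def by (rule acyclic_subset[OF Suc.prems(6)]) auto
  ultimately obtain a where a: "a \<in> A - B" and maximal: "\<forall>y\<in>A - B. (a, y) \<notin> R"
    using x by (rule finite_acyclic_obtain_maximal)
  have sink: "\<forall>b\<in>A. a \<notin> pa b" using a maximal Suc.prems(3) unfolding R_def by blast
  have IH: "(\<Sum>w | w \<subseteq> A - {a} \<and> w \<inter> B = v. bn_prob (A - {a}) p w) = bn_prob B p v"
  proof (rule Suc.hyps(1))
    show "k = card (A - {a} - B)" using Suc.hyps(2) a by (simp add: Diff_insert2[symmetric])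
    show "acyclic {(x, b). b \<in> A - {a} \<and> x \<in> pa b}"
      by (rule acyclic_subset[OF Suc.prems(6)]) auto
    show "\<And>b w w'. b \<in> A - {a} \<Longrightarrow> w \<inter> pa b = w' \<inter> pa b \<Longrightarrow> p b w = p b w'"
      using Suc.prems(5) by blast
  qed (use Suc.prems(1-4) a in auto)
  have "A = insert a (A - {a})" using a by auto
  then have "(\<Sum>w | w \<subseteq> A \<and> w \<inter> B = v. bn_prob A p w)
      = (\<Sum>w | w \<subseteq> A - {a} \<and> w \<inter> B = v. bn_prob A p w + bn_prob A p (insert a w))"
    using sum_subsets_insert[of a "A - {a}" B] a Suc.prems(1) by simp
  also have "\<dots> = (\<Sum>w | w \<subseteq> A - {a} \<and> w \<inter> B = v. bn_prob (A - {a}) p w)"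
  proof (intro sum.cong refl bn_prob_remove_sink)
    show "\<And>b w w'. b \<in> A \<Longrightarrow> w \<inter> pa b = w' \<inter> pa b \<Longrightarrow> p b w = p b w'"
      by (rule Suc.prems(5))
  qed (use a sink Suc.prems(1) in auto)
  finally show ?case using IH by simp
qed

lemma mem_gatoms [simp]:
  "(r, i) \<in> gatoms S ar n \<longleftrightarrow> r \<in> S \<and> length i = ar r \<and> set i \<subseteq> {..<n}"
  unfolding gatoms_def by simp

lemma finite_gatoms:
  assumes "finite S"
  shows "finite (gatoms S ar n)"
proof (rule finite_subset)
  show "gatoms S ar n \<subseteq> (\<Union>r\<in>S. {r} \<times> {i. set i \<subseteq> {..<n} \<and> length i = ar r})"
    unfolding gatoms_def by auto
  show "finite (\<Union>r\<in>S. {r} \<times> {i. set i \<subseteq> {..<n} \<and> length i = ar r})"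
    using assms by (intro finite_UN_I) (auto intro: finite_lists_length_eq)
qed

lemma gatoms_mono: "m \<le> n \<Longrightarrow> gatoms S ar m \<subseteq> gatoms S ar n"
  unfolding gatoms_def by auto

lemma peval_bounded: "wf_pform S ar k F \<Longrightarrow> 0 \<le> peval F i w \<and> peval F i w \<le> 1"
proof (induction F)
  case (PConv F1 F2 F3)
  then show ?case by (auto intro: convex_bound_le)
qed auto

lemma peval_cong: "w \<inter> patoms F i = w' \<inter> patoms F i \<Longrightarrow> peval F i w = peval F i w'"
proof (induction F)
  case (PConv F1 F2 F3)
  then have "w \<inter> patoms F1 i = w' \<inter> patoms F1 i" "w \<inter> patoms F2 i = w' \<inter> patoms F2 i"
    "w \<inter> patoms F3 i = w' \<inter> patoms F3 i" by auto
  with PConv.IH show ?case by simp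
qed auto

lemma patoms_subset_gatoms:
  "wf_pform S ar (length i) F \<Longrightarrow> set i \<subseteq> {..<n} \<Longrightarrow> patoms F i \<subseteq> gatoms S ar n"
  by (induction F) (auto dest!: nth_mem)

lemma peval_map:
  "wf_pform S ar (length i) F \<Longrightarrow> peval F (map \<pi> i) w = peval F i (apsnd (map \<pi>) -` w)"
proof (induction F)
  case (PAtom s vs)
  then have "map (\<lambda>j. map \<pi> i ! j) vs = map \<pi> (map (\<lambda>j. i ! j) vs)" by auto
  then show ?case by (simp only: peval.simps) simp
qed auto

definition rbn_cpd :: "('r \<Rightarrow> 'r pform) \<Rightarrow> 'r gatom \<Rightarrow> 'r gatom set \<Rightarrow> real" where
  "rbn_cpd F a = peval (F (fst a)) (snd a)"

definition rbn_parents :: "('r \<Rightarrow> 'r pform) \<Rightarrow> 'r gatom \<Rightarrow> 'r gatom set" where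
  "rbn_parents F a = patoms (F (fst a)) (snd a)"

lemma rbn_dist_eq_bn_prob: "rbn_dist S ar F n = bn_prob (gatoms S ar n) (rbn_cpd F)"
  unfolding rbn_dist_def bn_prob_def bn_factor_def rbn_cpd_def by (intro ext prod.cong) auto

lemma parent_rel_eq: "parent_rel S ar F n = {(x, a). a \<in> gatoms S ar n \<and> x \<in> rbn_parents F a}"
  unfolding parent_rel_def rbn_parents_def by auto

lemma rbn_cpd_cong:
  "w \<inter> rbn_parents F a = w' \<inter> rbn_parents F a \<Longrightarrow> rbn_cpd F a w = rbn_cpd F a w'"
  unfolding rbn_cpd_def rbn_parents_def by (rule peval_cong)

lemma rbn_cpd_bounded:
  assumes "\<forall>r\<in>S. wf_pform S ar (ar r) (F r)" "a \<in> gatoms S ar n"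
  shows "0 \<le> rbn_cpd F a w \<and> rbn_cpd F a w \<le> 1"
proof (cases a)
  case (Pair r i)
  with assms have "wf_pform S ar (ar r) (F r)" by simp
  with Pair show ?thesis unfolding rbn_cpd_def by (simp add: peval_bounded)
qed

lemma rbn_parents_subset_gatoms:
  assumes "\<forall>r\<in>S. wf_pform S ar (ar r) (F r)" "a \<in> gatoms S ar n"
  shows "rbn_parents F a \<subseteq> gatoms S ar n"
proof (cases a)
  case (Pair r i)
  with assms have "wf_pform S ar (length i) (F r)" "set i \<subseteq> {..<n}" by simp_all
  with Pair show ?thesis unfolding rbn_parents_def by (simp add: patoms_subset_gatoms)
qed

lemma sum_rbn_dist_restrict:
  assumes "finite S" "rbn_acyclic S ar F"
    and "B \<subseteq> gatoms S ar n" "\<forall>b\<in>B. rbn_parents F b \<subseteq> B" "v \<subseteq> B"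
  shows "(\<Sum>w | w \<subseteq> gatoms S ar n \<and> w \<inter> B = v. rbn_dist S ar F n w) = bn_prob B (rbn_cpd F) v"
  unfolding rbn_dist_eq_bn_prob
proof (rule bn_prob_marginal[OF finite_gatoms[OF assms(1)] assms(3-5)])
  show "acyclic {(x, a). a \<in> gatoms S ar n \<and> x \<in> rbn_parents F a}"
    using assms(2) unfolding rbn_acyclic_def parent_rel_eq by blast
qed (rule rbn_cpd_cong)

lemma is_RRSM_rbn_dist:
  assumes "finite S" "\<forall>r\<in>S. wf_pform S ar (ar r) (F r)" "rbn_acyclic S ar F"
  shows "is_RRSM S ar (rbn_dist S ar F)"
  unfolding is_RRSM_def is_distribution_def
proof (intro allI conjI ballI)
  fix n w
  show "0 \<le> rbn_dist S ar F n w"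
    unfolding rbn_dist_eq_bn_prob using rbn_cpd_bounded[OF assms(2)] by (rule bn_prob_nonneg)
  have "worlds S ar n = {w. w \<subseteq> gatoms S ar n \<and> w \<inter> {} = {}}"
    unfolding worlds_def by auto
  then show "(\<Sum>w\<in>worlds S ar n. rbn_dist S ar F n w) = 1"
    using sum_rbn_dist_restrict[OF assms(1,3), of "{}"] by (simp add: bn_prob_def)
qed

lemma rbn_dist_marginal:
  assumes "finite S" "\<forall>r\<in>S. wf_pform S ar (ar r) (F r)" "rbn_acyclic S ar F"
    and "m \<le> n" "w \<in> worlds S ar m"
  shows "marginal S ar n (rbn_dist S ar F n) m w = rbn_dist S ar F m w"
proof -
  have "{w' \<in> worlds S ar n. w' \<inter> gatoms S ar m = w} = {w'. w' \<subseteq> gatoms S ar n \<and> w' \<inter> gatoms S ar m = w}"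
    unfolding worlds_def by auto
  then have "marginal S ar n (rbn_dist S ar F n) m w
      = (\<Sum>w' | w' \<subseteq> gatoms S ar n \<and> w' \<inter> gatoms S ar m = w. rbn_dist S ar F n w')"
    unfolding marginal_def by simp
  also have "\<dots> = rbn_dist S ar F m w"
    unfolding rbn_dist_eq_bn_prob[of S ar F m]
    using assms rbn_parents_subset_gatoms[OF assms(2)]
    by (intro sum_rbn_dist_restrict gatoms_mono) (auto simp: worlds_def)
  finally show ?thesis .
qed

lemma bij_betw_apsnd_map_gatoms:
  assumes "bij_betw \<pi> {..<n} {..<n}"
  shows "bij_betw (apsnd (map \<pi>)) (gatoms S ar n) (gatoms S ar n)"
proof (rule bij_betw_byWitness[where f' = "apsnd (map (inv_into {..<n} \<pi>))"])
  have inv: "bij_betw (inv_into {..<n} \<pi>) {..<n} {..<n}" using assms by (rule bij_betw_inv_into)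
  have "map (inv_into {..<n} \<pi>) (map \<pi> i) = i" if "set i \<subseteq> {..<n}" for i
    using that bij_betw_inv_into_left[OF assms] by (auto intro!: map_idI)
  then show "\<forall>a\<in>gatoms S ar n. apsnd (map (inv_into {..<n} \<pi>)) (apsnd (map \<pi>) a) = a"
    by auto
  have "map \<pi> (map (inv_into {..<n} \<pi>) i) = i" if "set i \<subseteq> {..<n}" for i
    using that bij_betw_inv_into_right[OF assms] by (auto intro!: map_idI)
  then show "\<forall>a\<in>gatoms S ar n. apsnd (map \<pi>) (apsnd (map (inv_into {..<n} \<pi>)) a) = a"
    by auto
  show "apsnd (map \<pi>) ` gatoms S ar n \<subseteq> gatoms S ar n"
    using bij_betwE[OF assms] by force
  show "apsnd (map (inv_into {..<n} \<pi>)) ` gatoms S ar n \<subseteq> gatoms S ar n"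
    using bij_betwE[OF inv] by force
qed

lemma exchangeable_rbn_dist:
  assumes "\<forall>r\<in>S. wf_pform S ar (ar r) (F r)"
  shows "exchangeable S ar n (rbn_dist S ar F n)"
  unfolding exchangeable_def
proof (intro ballI impI)
  fix w w' assume "isomorphic_worlds S ar n w w'"
  then obtain \<pi> where bij: "bij_betw \<pi> {..<n} {..<n}"
    and "\<forall>(r, i)\<in>gatoms S ar n. (r, i) \<in> w \<longleftrightarrow> (r, map \<pi> i) \<in> w'"
    unfolding isomorphic_worlds_def by blast
  then have iso: "a \<in> w \<longleftrightarrow> apsnd (map \<pi>) a \<in> w'" if "a \<in> gatoms S ar n" for a
    using that by (cases a) auto
  have factor: "bn_factor (rbn_cpd F) (apsnd (map \<pi>) a) w' = bn_factor (rbn_cpd F) a w"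
    if a: "a \<in> gatoms S ar n" for a
  proof (cases a)
    case (Pair r i)
    with a assms have wf: "wf_pform S ar (length i) (F r)" by simp
    have "apsnd (map \<pi>) -` w' \<inter> rbn_parents F a = w \<inter> rbn_parents F a"
      using iso rbn_parents_subset_gatoms[OF assms a] by auto
    then have "rbn_cpd F a (apsnd (map \<pi>) -` w') = rbn_cpd F a w"
      by (rule rbn_cpd_cong)
    then have "rbn_cpd F (apsnd (map \<pi>) a) w' = rbn_cpd F a w"
      using Pair peval_map[OF wf] by (simp add: rbn_cpd_def)
    with iso[OF a] show ?thesis by (simp add: bn_factor_def)
  qed
  have "rbn_dist S ar F n w' = (\<Prod>a\<in>gatoms S ar n. bn_factor (rbn_cpd F) (apsnd (map \<pi>) a) w')"
    unfolding rbn_dist_eq_bn_prob bn_prob_def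
    by (rule prod.reindex_bij_betw[OF bij_betw_apsnd_map_gatoms[OF bij], symmetric])
  also have "\<dots> = rbn_dist S ar F n w"
    unfolding rbn_dist_eq_bn_prob bn_prob_def using factor by (rule prod.cong[OF refl])
  finally show "rbn_dist S ar F n w = rbn_dist S ar F n w'" by simp
qed

theorem mainTheorem1:
  fixes S :: "'r set" and ar :: "'r \<Rightarrow> nat" and F :: "'r \<Rightarrow> 'r pform"
  assumes "finite S"
    and "\<forall>r\<in>S. wf_pform S ar (ar r) (F r)"
    and "rbn_acyclic S ar F"
  shows "is_RRSM S ar (rbn_dist S ar F) \<and> projective S ar (rbn_dist S ar F)"
proof
  show "is_RRSM S ar (rbn_dist S ar F)"
    using assms by (rule is_RRSM_rbn_dist)
  show "projective S ar (rbn_dist S ar F)"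
    unfolding projective_def
    using exchangeable_rbn_dist[OF assms(2)] rbn_dist_marginal[OF assms] by simp
qed

end
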